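(* Let $T=\bigoplus_{i=1}^{n-1}T_i$ be a basic maximal rigid object in $\mathcal{C}_n$ and $T_k$ one of its indecomposable summands. (i) Exactly $\operatorname{ql}T_k$ of the indecomposable summands of $T$ lie in $\mathcal{W}_{T_k}$. (ii) If $\operatorname{ql}T_k>1$, there is a subwing triple $(T_k;T_{k'},T_{k''})$ such that each of $T_{k'},T_{k''}$ is either a summand of $T$ or zero, all indecomposable summands of $T$ other than $T_k$ that lie in $\mathcal{W}_{T_k}$ lie in $\mathcal{W}_{T_{k'}}\cup\mathcal{W}_{T_{k''}}$, and exactly $\operatorname{ql}T_{k'}$ of them lie in $\mathcal{W}_{T_{k'}}$ and exactly $\operatorname{ql}T_{k''}$ lie in $\mathcal{W}_{T_{k''}}$.
   Context: Let $k$ be algebraically closed, $n\ge2$, $\mathcal{T}_n$ the tube of rank $n$ (finite-dimensional nilpotent representations of the cyclically oriented $\tilde A_{n-1}$-quiver; AR-translation $\tau$), $\mathcal{C}_n=D^b(\mathcal{T}_n)/\tau^{-1}[1]$ the cluster tube, with indecomposables identified with those of $\mathcal{T}_n$. Indecomposables have coordinates $(a,b)$, $a\in\mathbb{Z}/n$, $b\ge1$ the quasilength $\operatorname{ql}$, with $\tau(a,b)=(a-1,b)$ and irreducible maps $(a,b)\to(a,b+1)$ and $(a,b)\to(a+1,b-1)$. For $X=(a,i)$, $i\le n-1$, the wing $\mathcal{W}_X$ is $\{(a+s,i'):s\ge0,i'\ge1,s+i'\le i\}$; $\mathcal{W}_0=\emptyset$ and $\operatorname{ql}0=0$. $T$ is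 maximal rigid if $\operatorname{Ext}^1_{\mathcal{C}_n}(T,T)=0$ and $\operatorname{Ext}^1(T\oplus X,T\oplus X)=0$ implies $X\in\operatorname{add}T$; a basic maximal rigid object has $n-1$ pairwise non-isomorphic indecomposable summands, a unique one (the top summand) of quasilength $n-1$, and all lie in its wing. A non-degenerate subwing triple $(X;Y,Z)$: $X=(a,b)$ with $3\le b\le n-1$, $Y=(a,c)$, $Z=(a+c+1,b-c-1)$ for some $1\le c\le b-2$. A degenerate subwing triple $(X;Y,Z)$: $X=(a,b)$, $2\le b\le n-1$, and either $Y=(a,b-1)$, $Z=0$, or $Y=0$, $Z=(a+1,b-1)$. *)

theory Defs
  imports Main
begin

text \<open>Indecomposables of the tube T_n (and of the cluster tube C_n): pairs (a,b),
  a in {0..<n} representing Z/n, b \<ge> 1 the quasilength.  The indecomposable (a,b)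
  is the uniserial module with socle S_a and composition factors
  S_a, S_(a+1), ..., S_(a+b-1) (indices mod n) from socle to top; this matches
  the irreducible maps (a,b) -> (a,b+1) (mono) and (a,b) -> (a+1,b-1) (epi).
  The zero object is encoded as None in the type (nat \<times> nat) option.\<close>

definition indec :: "nat \<Rightarrow> (nat \<times> nat) set" where
  "indec n = {(a,b). a < n \<and> 1 \<le> b}"

definition ql :: "nat \<times> nat \<Rightarrow> nat" where
  "ql X = snd X"

definition tau :: "nat \<Rightarrow> nat \<times> nat \<Rightarrow> nat \<times> nat" where
  "tau n X = ((fst X + n - 1) mod n, snd X)"

text \<open>dim_k Hom_T((a,b),(c,d)) for uniserial modules over the tube: nonzero maps
  factor through a common quotient of (a,b) / submodule of (c,d) of length j,
  which exists iff c + j = a + b mod n; each gives a one-dimensional piece.\<close>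

definition hom_dim :: "nat \<Rightarrow> nat \<times> nat \<Rightarrow> nat \<times> nat \<Rightarrow> nat" where
  "hom_dim n X Y =
     card {j. 1 \<le> j \<and> j \<le> min (snd X) (snd Y) \<and>
              (fst X + snd X) mod n = (fst Y + j) mod n}"

text \<open>Auslander-Reiten formula in T_n: Ext^1_T(X,Y) = D Hom_T(Y, tau X).\<close>
definition ext_tube_dim :: "nat \<Rightarrow> nat \<times> nat \<Rightarrow> nat \<times> nat \<Rightarrow> nat" where
  "ext_tube_dim n X Y = hom_dim n Y (tau n X)"

text \<open>In the cluster tube: Ext^1_C(X,Y) = Ext^1_T(X,Y) \<oplus> D Ext^1_T(Y,X).\<close>
definition ext_C_dim :: "nat \<Rightarrow> nat \<times> nat \<Rightarrow> nat \<times> nat \<Rightarrow> nat" where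
  "ext_C_dim n X Y = ext_tube_dim n X Y + ext_tube_dim n Y X"

text \<open>A basic object is a finite set of indecomposables; Ext^1 is additive, so
  Ext^1_C(T,T) = 0 iff it vanishes on all pairs of summands.\<close>
definition rigid :: "nat \<Rightarrow> (nat \<times> nat) set \<Rightarrow> bool" where
  "rigid n T \<longleftrightarrow> T \<subseteq> indec n \<and> finite T \<and>
     (\<forall>X\<in>T. \<forall>Y\<in>T. ext_C_dim n X Y = 0)"

definition maximal_rigid :: "nat \<Rightarrow> (nat \<times> nat) set \<Rightarrow> bool" where
  "maximal_rigid n T \<longleftrightarrow> rigid n T \<and>
     (\<forall>X. X \<subseteq> indec n \<and> finite X \<and> rigid n (T \<union> X) \<longrightarrow> X \<subseteq> T)"

definition wing :: "nat \<Rightarrow> nat \<times> nat \<Rightarrow> (nat \<times> nat) set" where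
  "wing n X = {((fst X + s) mod n, i') | s i'. 1 \<le> i' \<and> s + i' \<le> snd X}"

definition wing0 :: "nat \<Rightarrow> (nat \<times> nat) option \<Rightarrow> (nat \<times> nat) set" where
  "wing0 n Y = (case Y of None \<Rightarrow> {} | Some X \<Rightarrow> wing n X)"

definition ql0 :: "(nat \<times> nat) option \<Rightarrow> nat" where
  "ql0 Y = (case Y of None \<Rightarrow> 0 | Some X \<Rightarrow> ql X)"

definition nondeg_subwing_triple ::
  "nat \<Rightarrow> nat \<times> nat \<Rightarrow> (nat \<times> nat) option \<Rightarrow> (nat \<times> nat) option \<Rightarrow> bool" where
  "nondeg_subwing_triple n X Y Z \<longleftrightarrow>
     (let a = fst X; b = snd X in
       3 \<le> b \<and> b \<le> n - 1 \<and>
       (\<exists>c. 1 \<le> c \<and> c \<le> b - 2 \<and> Y = Some (a, c) \<and>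
            Z = Some ((a + c + 1) mod n, b - c - 1)))"

definition deg_subwing_triple ::
  "nat \<Rightarrow> nat \<times> nat \<Rightarrow> (nat \<times> nat) option \<Rightarrow> (nat \<times> nat) option \<Rightarrow> bool" where
  "deg_subwing_triple n X Y Z \<longleftrightarrow>
     (let a = fst X; b = snd X in
       2 \<le> b \<and> b \<le> n - 1 \<and>
       ((Y = Some (a, b - 1) \<and> Z = None) \<or>
        (Y = None \<and> Z = Some ((a + 1) mod n, b - 1))))"

definition subwing_triple ::
  "nat \<Rightarrow> nat \<times> nat \<Rightarrow> (nat \<times> nat) option \<Rightarrow> (nat \<times> nat) option \<Rightarrow> bool" where
  "subwing_triple n X Y Z \<longleftrightarrow>
     nondeg_subwing_triple n X Y Z \<or> deg_subwing_triple n X Y Z"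

definition summand_or_zero :: "(nat \<times> nat) set \<Rightarrow> (nat \<times> nat) option \<Rightarrow> bool" where
  "summand_or_zero T Y \<longleftrightarrow> (case Y of None \<Rightarrow> True | Some X \<Rightarrow> X \<in> T)"

end

theory Submission
  imports Defs "HOL-Number_Theory.Cong"
begin

text \<open>Rotating coordinates so that \<open>T\<^sub>k = (a,b)\<close> sits at position 0, the
  indecomposables in its wing become pairs \<open>(s,i)\<close> with \<open>s + i \<le> b\<close>. Since a summand
  of quasilength \<open>\<ge> n\<close> has self-extensions, \<open>b < n\<close>, so nothing wraps around the tube and
  two such objects have vanishing \<open>Ext\<^sup>1\<close> in \<open>C\<^sub>n\<close> iff the corresponding
  intervals do not cross. A summand outside the wing that is orthogonal to \<open>T\<^sub>k\<close> is
  orthogonal to the whole wing, so the summands in the wing form a maximal noncrossing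
  family in the window. Such a family splits at its longest proper interval starting at 0
  into two maximal families on complementary subwindows; this is the subwing triple, and
  induction on the window length shows that the family has exactly \<open>b\<close> members.\<close>

section \<open>Noncrossing intervals\<close>

text \<open>The pair \<open>(s,i)\<close> stands for the interval \<open>[s, s+i+1)\<close>; two intervals cross when
  they overlap without being nested.\<close>

definition crosses :: "nat \<times> nat \<Rightarrow> nat \<times> nat \<Rightarrow> bool" where
  "crosses x y \<longleftrightarrow> fst y < fst x \<and> fst x \<le> fst y + snd y \<and> fst y + snd y < fst x + snd x"

definition noncrossing :: "nat \<times> nat \<Rightarrow> nat \<times> nat \<Rightarrow> bool" where
  "noncrossing x y \<longleftrightarrow> \<not> crosses x y \<and> \<not> crosses y x"

definition window :: "nat \<Rightarrow> nat \<Rightarrow> (nat \<times> nat) set" where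
  "window p L = {x. p \<le> fst x \<and> 1 \<le> snd x \<and> fst x + snd x \<le> p + L}"

definition maximal_noncrossing :: "(nat \<times> nat) set \<Rightarrow> nat \<Rightarrow> nat \<Rightarrow> bool" where
  "maximal_noncrossing F p L \<longleftrightarrow> F \<subseteq> window p L \<and> (\<forall>x\<in>F. \<forall>y\<in>F. noncrossing x y) \<and>
     (\<forall>y\<in>window p L. (\<forall>x\<in>F. noncrossing x y) \<longrightarrow> y \<in> F)"

lemma window_0 [simp]: "window p 0 = {}"
  by (auto simp: window_def)

lemma finite_window: "finite (window p L)"
  by (rule finite_subset[of _ "{..p+L} \<times> {..p+L}"]) (auto simp: window_def)

lemma window_subset: "(q,M) \<in> window p L \<Longrightarrow> window q M \<subseteq> window p L"
  by (auto simp: window_def)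

lemma noncrossing_top: "y \<in> window p L \<Longrightarrow> noncrossing y (p,L)"
  by (auto simp: noncrossing_def crosses_def window_def)

lemma noncrossing_outside_window:
  assumes "noncrossing x (q,M)" "1 \<le> snd x" "x \<notin> window q M" "y \<in> window q M"
  shows "noncrossing x y"
  using assms by (cases x, cases y) (auto simp: noncrossing_def crosses_def window_def)

lemma noncrossing_gap:
  "x \<in> window p c \<union> window (p+c+1) M \<Longrightarrow> noncrossing x (p+c+1, M)"
  by (auto simp: noncrossing_def crosses_def window_def)

lemma maximal_noncrossing_restrict:
  assumes F: "maximal_noncrossing F p L" and qM: "(q,M) \<in> F"
  shows "maximal_noncrossing (F \<inter> window q M) q M"
  unfolding maximal_noncrossing_def
proof (intro conjI ballI impI)
  show "F \<inter> window q M \<subseteq> window q M" by auto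
  show "noncrossing x y" if "x \<in> F \<inter> window q M" "y \<in> F \<inter> window q M" for x y
    using F that by (auto simp: maximal_noncrossing_def)
  fix y assume y: "y \<in> window q M" and nc: "\<forall>x\<in>F \<inter> window q M. noncrossing x y"
  have "noncrossing x y" if x: "x \<in> F" for x
  proof (cases "x \<in> window q M")
    case False
    moreover have "noncrossing x (q,M)" "1 \<le> snd x"
      using F x qM by (auto simp: maximal_noncrossing_def window_def)
    ultimately show ?thesis using noncrossing_outside_window y by blast
  qed (use nc x in auto)
  moreover have "y \<in> window p L"
    using window_subset[of q M p L] F qM y by (auto simp: maximal_noncrossing_def)
  ultimately show "y \<in> F \<inter> window q M" using F y by (auto simp: maximal_noncrossing_def)
qed

lemma maximal_noncrossing_split:
  assumes F: "maximal_noncrossing F p L" and top: "(p,L) \<in> F"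
  obtains c where "c < L" "c = 0 \<or> (p,c) \<in> F" "L - c - 1 = 0 \<or> (p+c+1, L-c-1) \<in> F"
    "F - {(p,L)} \<subseteq> window p c \<union> window (p+c+1) (L-c-1)"
proof -
  txt \<open>\<open>c\<close> is the longest proper interval of \<open>F\<close> starting at \<open>p\<close> (0 if there is none);
    the complementary interval is then forced into \<open>F\<close> by maximality.\<close>
  have sub: "F \<subseteq> window p L" and nc: "\<And>x y. x \<in> F \<Longrightarrow> y \<in> F \<Longrightarrow> noncrossing x y"
    and mx: "\<And>y. y \<in> window p L \<Longrightarrow> (\<And>x. x \<in> F \<Longrightarrow> noncrossing x y) \<Longrightarrow> y \<in> F"
    using F by (auto simp: maximal_noncrossing_def)
  define C where "C = {d. (p,d) \<in> F \<and> d < L}"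
  define c where "c = Max (insert 0 C)"
  have finC: "finite C" unfolding C_def by (rule finite_subset[of _ "{..<L}"]) auto
  have L1: "1 \<le> L" using top sub by (auto simp: window_def)
  have cL: "c < L" using finC L1 by (auto simp: c_def C_def)
  have pc: "c = 0 \<or> (p,c) \<in> F"
    using Max_in[of "insert 0 C"] finC unfolding c_def C_def by auto
  have le_c: "d \<le> c" if "d \<in> C" for d using finC that unfolding c_def by auto
  have cover: "F - {(p,L)} \<subseteq> window p c \<union> window (p+c+1) (L-c-1)"
  proof
    fix x assume x: "x \<in> F - {(p,L)}"
    obtain s i where xs: "x = (s,i)" by (cases x)
    have w: "p \<le> s" "1 \<le> i" "s + i \<le> p + L" using sub x xs by (auto simp: window_def)
    show "x \<in> window p c \<union> window (p+c+1) (L-c-1)"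
    proof (cases "s = p")
      case True
      then have "i \<in> C" using x xs w unfolding C_def by auto
      then show ?thesis using le_c True w xs by (auto simp: window_def)
    next
      case False
      have "s + i \<le> p + c \<or> p + c < s"
        using pc nc[of x "(p,c)"] x xs w False by (auto simp: noncrossing_def crosses_def)
      then show ?thesis using False w xs cL by (auto simp: window_def)
    qed
  qed
  have "(p+c+1, L-c-1) \<in> F" if "L - c - 1 \<noteq> 0"
  proof (rule mx)
    show "(p+c+1, L-c-1) \<in> window p L" using that by (auto simp: window_def)
    show "noncrossing x (p+c+1, L-c-1)" if x: "x \<in> F" for x
    proof (cases "x = (p,L)")
      case True
      have "noncrossing (p+c+1, L-c-1) (p,L)"
        using \<open>L - c - 1 \<noteq> 0\<close> by (intro noncrossing_top) (auto simp: window_def)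
      then show ?thesis using True by (auto simp: noncrossing_def)
    qed (use x cover noncrossing_gap in blast)
  qed
  then show ?thesis using that[OF cL pc _ cover] by auto
qed

lemma card_maximal_noncrossing:
  assumes "maximal_noncrossing F p L" "(p,L) \<in> F"
  shows "card F = L"
  using assms
proof (induction L arbitrary: F p rule: less_induct)
  case (less L)
  have finF: "finite F"
    using less.prems finite_subset[OF _ finite_window] by (auto simp: maximal_noncrossing_def)
  have sub_card: "card (F \<inter> window q M) = M" if "M < L" "M = 0 \<or> (q,M) \<in> F" for q M
  proof (cases "M = 0")
    case False
    then have "(q,M) \<in> F \<inter> window q M" using that by (auto simp: window_def)
    then show ?thesis
      using less.IH[OF \<open>M < L\<close> maximal_noncrossing_restrict[OF less.prems(1)]] by blast
  qed simp
  obtain c where c: "c < L" "c = 0 \<or> (p,c) \<in> F" "L - c - 1 = 0 \<or> (p+c+1, L-c-1) \<in> F"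
    and cover: "F - {(p,L)} \<subseteq> window p c \<union> window (p+c+1) (L-c-1)"
    using maximal_noncrossing_split[OF less.prems] by blast
  define A where "A = F \<inter> window p c"
  define B where "B = F \<inter> window (p+c+1) (L-c-1)"
  have fin: "finite A" "finite B" using finF unfolding A_def B_def by auto
  have "F = insert (p,L) (A \<union> B)" using cover less.prems(2) unfolding A_def B_def by auto
  also have "card \<dots> = Suc (card A + card B)"
  proof -
    have "(p,L) \<notin> A \<union> B" "A \<inter> B = {}"
      using c(1) unfolding A_def B_def by (auto simp: window_def)
    then show ?thesis using fin by (simp add: card_Un_disjoint)
  qed
  also have "card A + card B = c + (L - c - 1)"
    using sub_card c unfolding A_def B_def by auto
  finally show ?case using c(1) by simp
qed

section \<open>Extensions between shifted indecomposables\<close>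

definition shift :: "nat \<Rightarrow> nat \<Rightarrow> nat \<times> nat \<Rightarrow> nat \<times> nat" where
  "shift n a x = ((a + fst x) mod n, snd x)"

definition tube_ext :: "nat \<Rightarrow> nat \<times> nat \<Rightarrow> nat \<times> nat \<Rightarrow> bool" where
  "tube_ext n x y \<longleftrightarrow> (\<exists>j. 1 \<le> j \<and> j \<le> min (snd x) (snd y) \<and>
      (fst y + snd y + 1) mod n = (fst x + j) mod n)"

lemma mod_eq_less_double:
  fixes x y n :: nat
  assumes "x < 2*n" "y < 2*n" "x mod n = y mod n"
  shows "x = y \<or> x = y + n \<or> y = x + n"
  using assms by (cases "x < n"; cases "y < n") (auto simp: le_mod_geq)

lemma mod_shift_tau_iff:
  fixes n a x y :: nat
  assumes "0 < n"
  shows "((a + x) mod n + y) mod n = (((a + u) mod n + n - 1) mod n + j) mod n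
     \<longleftrightarrow> (x + y + 1) mod n = (u + j) mod n"
proof -
  have lhs: "((a + x) mod n + y) mod n = (a + x + y) mod n" by (simp add: mod_simps)
  have "(a + u) mod n + n - 1 = (a + u) mod n + (n - 1)" using assms by simp
  then have rhs: "(((a + u) mod n + n - 1) mod n + j) mod n = (a + u + (n - 1) + j) mod n"
    by (simp add: mod_simps)
  have succ: "(a + x + y) mod n = (a + u + (n - 1) + j) mod n
        \<longleftrightarrow> (a + x + y + 1) mod n = (a + u + (n - 1) + j + 1) mod n"
    using cong_add_rcancel_nat[of "a + x + y" 1 "a + u + (n - 1) + j" n] by (simp add: cong_def)
  have wrap: "a + u + (n - 1) + j + 1 = (a + u + j) + n" using assms by simp
  have cancel: "(a + x + y + 1) mod n = (a + u + j) mod n \<longleftrightarrow> (x + y + 1) mod n = (u + j) mod n"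
    using cong_add_lcancel_nat[of a "x + y + 1" "u + j" n] by (simp add: cong_def add.assoc)
  show ?thesis by (simp only: lhs rhs succ wrap mod_add_self2 cancel)
qed

lemma ext_tube_dim_shift_eq_0:
  assumes "0 < n"
  shows "ext_tube_dim n (shift n a x) (shift n a y) = 0 \<longleftrightarrow> \<not> tube_ext n x y"
proof -
  define S where "S = {j. 1 \<le> j \<and> j \<le> min (snd y) (snd x) \<and>
     ((a + fst y) mod n + snd y) mod n = (((a + fst x) mod n + n - 1) mod n + j) mod n}"
  have "ext_tube_dim n (shift n a x) (shift n a y) = card S"
    unfolding S_def ext_tube_dim_def hom_dim_def tau_def shift_def by simp
  moreover have "finite S" unfolding S_def by (rule finite_subset[of _ "{..snd y}"]) auto
  moreover have "S = {j. 1 \<le> j \<and> j \<le> min (snd x) (snd y) \<and>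
      (fst y + snd y + 1) mod n = (fst x + j) mod n}"
    unfolding S_def using mod_shift_tau_iff[OF assms] by (auto simp: min_def)
  ultimately show ?thesis unfolding tube_ext_def by auto
qed

lemma ext_C_dim_shift_eq_0:
  assumes "0 < n"
  shows "ext_C_dim n (shift n a x) (shift n a y) = 0 \<longleftrightarrow> \<not> tube_ext n x y \<and> \<not> tube_ext n y x"
  using ext_tube_dim_shift_eq_0[OF assms] unfolding ext_C_dim_def by simp

lemma ext_C_dim_commute: "ext_C_dim n X Y = ext_C_dim n Y X"
  unfolding ext_C_dim_def by simp

lemma tube_ext_iff_crosses:
  assumes "b < n" "x \<in> window 0 b" "y \<in> window 0 b"
  shows "tube_ext n x y \<longleftrightarrow> crosses x y"
proof
  assume "tube_ext n x y"
  then obtain j where j: "1 \<le> j" "j \<le> min (snd x) (snd y)"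
    "(fst y + snd y + 1) mod n = (fst x + j) mod n" unfolding tube_ext_def by auto
  have "fst y + snd y + 1 < 2*n" "fst x + j < 2*n" using assms j by (auto simp: window_def)
  from mod_eq_less_double[OF this j(3)] have "fst y + snd y + 1 = fst x + j"
    using assms j by (auto simp: window_def)
  then show "crosses x y" using j unfolding crosses_def by auto
next
  assume "crosses x y"
  then have "1 \<le> j \<and> j \<le> min (snd x) (snd y) \<and> (fst y + snd y + 1) mod n = (fst x + j) mod n"
    if "j = fst y + snd y + 1 - fst x" for j
    using that unfolding crosses_def by auto
  then show "tube_ext n x y" unfolding tube_ext_def by blast
qed

lemma ext_C_dim_shift_window:
  assumes "b < n" "x \<in> window 0 b" "y \<in> window 0 b"
  shows "ext_C_dim n (shift n a x) (shift n a y) = 0 \<longleftrightarrow> noncrossing x y"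
  using assms ext_C_dim_shift_eq_0[of n] tube_ext_iff_crosses[OF assms(1)]
  unfolding noncrossing_def by auto

text \<open>An extension between \<open>y\<close> and an object reaching beyond the right end of the
  window forces an extension between that object and the top \<open>(0,b)\<close> of the window.\<close>

lemma tube_ext_outside_window:
  assumes n: "b < n" and u: "u < n" and e: "1 \<le> e" "e < n" and ue: "b < u + e"
    and y: "y \<in> window 0 b"
    and top: "\<not> tube_ext n (0,b) (u,e)" "\<not> tube_ext n (u,e) (0,b)"
  shows "\<not> tube_ext n (u,e) y \<and> \<not> tube_ext n y (u,e)"
proof
  obtain s i where ys: "y = (s,i)" by (cases y)
  have w: "1 \<le> i" "s + i \<le> b" using y ys by (auto simp: window_def)
  show "\<not> tube_ext n y (u,e)"
  proof
    assume "tube_ext n y (u,e)"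
    then obtain j where j: "1 \<le> j" "j \<le> min i e" "(u + e + 1) mod n = (s + j) mod n"
      unfolding tube_ext_def ys by auto
    have "u + e + 1 < 2*n" "s + j < 2*n" using n u e j w by auto
    from mod_eq_less_double[OF this j(3)] have "u + e + 1 = s + j + n" using ue j w by auto
    then have "1 \<le> s + j \<and> s + j \<le> min b e \<and> (u + e + 1) mod n = (0 + (s + j)) mod n"
      using j w u by auto
    then show False using top(1) unfolding tube_ext_def by auto
  qed
  show "\<not> tube_ext n (u,e) y"
  proof
    assume "tube_ext n (u,e) y"
    then obtain j where j: "1 \<le> j" "j \<le> min e i" "(s + i + 1) mod n = (u + j) mod n"
      unfolding tube_ext_def ys by auto
    have "s + i + 1 < 2*n" "u + j < 2*n" using n u e j w by auto
    from mod_eq_less_double[OF this j(3)] have "s + i + 1 = u + j" using n u j w by auto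
    then have "1 \<le> b + 1 - u \<and> b + 1 - u \<le> min e b \<and> (b + 1) mod n = (u + (b + 1 - u)) mod n"
      using j w ue by auto
    then show False using top(2) unfolding tube_ext_def by auto
  qed
qed

lemma ext_C_dim_shift_outside_window:
  assumes "b < n" "u < n" "1 \<le> e" "e < n" "b < u + e" "y \<in> window 0 b"
    and "ext_C_dim n (shift n a (0,b)) (shift n a (u,e)) = 0"
  shows "ext_C_dim n (shift n a (u,e)) (shift n a y) = 0"
  using assms tube_ext_outside_window[OF assms(1-6)] ext_C_dim_shift_eq_0[of n] by simp

lemma ql_less_of_rigid:
  assumes "0 < n" "rigid n T" "X \<in> T"
  shows "ql X < n"
proof (rule ccontr)
  obtain z e where X: "X = (z,e)" by (cases X)
  have z: "z < n" using assms X by (auto simp: rigid_def indec_def)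
  assume "\<not> ql X < n"
  then have "1 \<le> e + 1 - n \<and> e + 1 - n \<le> min e e \<and> (0 + e + 1) mod n = (0 + (e + 1 - n)) mod n"
    using X assms(1) by (auto simp: le_mod_geq ql_def)
  then have "tube_ext n (0,e) (0,e)" unfolding tube_ext_def by auto
  moreover have "shift n z (0,e) = X" using X z by (simp add: shift_def)
  ultimately have "ext_C_dim n X X \<noteq> 0"
    using ext_C_dim_shift_eq_0[OF assms(1), of z "(0,e)" "(0,e)"] by simp
  then show False using assms by (auto simp: rigid_def)
qed

lemma shift_surj:
  assumes "z < n"
  obtains u where "u < n" "shift n a (u,e) = (z,e)"
proof
  have "(a + (z + n - a mod n) mod n) mod n = (a mod n + (z + n - a mod n)) mod n"
    by (simp add: mod_simps)
  also have "a mod n + (z + n - a mod n) = z + n"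
    using assms mod_less_divisor[of n a] by linarith
  finally show "shift n a ((z + n - a mod n) mod n, e) = (z,e)"
    using assms by (simp add: shift_def)
qed (use assms in simp)

lemma wing_shift: "wing n (shift n a (p,L)) = shift n a ` window p L"
proof
  show "wing n (shift n a (p,L)) \<subseteq> shift n a ` window p L"
  proof
    fix X assume "X \<in> wing n (shift n a (p,L))"
    then obtain s i where X: "X = (((a + p) mod n + s) mod n, i)" "1 \<le> i" "s + i \<le> L"
      unfolding wing_def shift_def by auto
    then have "X = shift n a (p + s, i)" "(p + s, i) \<in> window p L"
      by (simp_all add: shift_def mod_simps add.assoc window_def)
    then show "X \<in> shift n a ` window p L" by blast
  qed
  show "shift n a ` window p L \<subseteq> wing n (shift n a (p,L))"
  proof
    fix X assume "X \<in> shift n a ` window p L"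
    then obtain d i where X: "X = shift n a (p + d, i)" "1 \<le> i" "d + i \<le> L"
      by (auto simp: window_def dest!: le_Suc_ex)
    then have "X = (((a + p) mod n + d) mod n, i)" by (simp add: shift_def mod_simps add.assoc)
    then show "X \<in> wing n (shift n a (p,L))" using X unfolding wing_def shift_def by auto
  qed
qed

lemma inj_on_shift_window:
  assumes "b \<le> n"
  shows "inj_on (shift n a) (window 0 b)"
proof
  fix x y assume x: "x \<in> window 0 b" and y: "y \<in> window 0 b" and eq: "shift n a x = shift n a y"
  have "fst x < n" "fst y < n" using x y assms by (auto simp: window_def)
  moreover from this have "a mod n < n" by simp
  ultimately have "a mod n + fst x < 2*n" "a mod n + fst y < 2*n" by linarith+
  moreover have "(a mod n + fst x) mod n = (a mod n + fst y) mod n"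
    using eq by (simp add: shift_def mod_simps)
  ultimately have "fst x = fst y"
    using mod_eq_less_double x y assms by (fastforce simp: window_def)
  then show "x = y" using eq by (simp add: shift_def prod_eq_iff)
qed

section \<open>Summands of a maximal rigid object in a wing\<close>

lemma mem_of_maximal_rigid:
  assumes T: "maximal_rigid n T" and X: "X \<in> indec n" "ext_C_dim n X X = 0"
    and orth: "\<And>Z. Z \<in> T \<Longrightarrow> ext_C_dim n Z X = 0"
  shows "X \<in> T"
proof -
  have rig: "rigid n T"
    and max: "\<And>Y. Y \<subseteq> indec n \<Longrightarrow> finite Y \<Longrightarrow> rigid n (T \<union> Y) \<Longrightarrow> Y \<subseteq> T"
    using T by (simp_all add: maximal_rigid_def)
  have orth': "ext_C_dim n X Z = 0" if "Z \<in> T" for Z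
    using orth[OF that] ext_C_dim_commute[of n X Z] by simp
  have "rigid n (T \<union> {X})"
    using rig X by (simp add: rigid_def orth orth')
  then show ?thesis using max[of "{X}"] X(1) by simp
qed
lemma maximal_noncrossing_summands:
  assumes n: "0 < n" and T: "maximal_rigid n T" and top: "(a,b) \<in> T"
  shows "maximal_noncrossing {x \<in> window 0 b. shift n a x \<in> T} 0 b"
    (is "maximal_noncrossing ?F 0 b")
  unfolding maximal_noncrossing_def
proof (intro conjI ballI impI)
  have rig: "rigid n T" using T by (simp add: maximal_rigid_def)
  then have indec: "T \<subseteq> indec n" and orth_T: "\<And>X Y. X \<in> T \<Longrightarrow> Y \<in> T \<Longrightarrow> ext_C_dim n X Y = 0"
    by (auto simp: rigid_def)
  have bn: "b < n" using ql_less_of_rigid[OF n rig top] by (simp add: ql_def)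
  show "?F \<subseteq> window 0 b" by auto
  show "noncrossing x y" if "x \<in> ?F" "y \<in> ?F" for x y
    using that orth_T ext_C_dim_shift_window[OF bn, of x y a] by auto
  fix y assume y: "y \<in> window 0 b" and nc: "\<forall>x\<in>?F. noncrossing x y"
  have orth: "ext_C_dim n Z (shift n a y) = 0" if Z: "Z \<in> T" for Z
  proof -
    obtain z e where Ze: "Z = (z,e)" by (cases Z)
    have z: "z < n" and e: "1 \<le> e" "e < n"
      using indec Z Ze ql_less_of_rigid[OF n rig Z] by (auto simp: indec_def ql_def)
    obtain u where u: "u < n" and Zu: "shift n a (u,e) = Z" using shift_surj[OF z] Ze by metis
    show ?thesis
    proof (cases "u + e \<le> b")
      case True
      then have "(u,e) \<in> ?F" using Z e Zu by (simp add: window_def)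
      then have "noncrossing (u,e) y" using nc by blast
      then show ?thesis using ext_C_dim_shift_window[OF bn _ y, of "(u,e)" a] \<open>(u,e) \<in> ?F\<close> Zu by simp
    next
      case False
      have "shift n a (0,b) = (a,b)" using top indec by (auto simp: shift_def indec_def)
      then have "ext_C_dim n (shift n a (0,b)) (shift n a (u,e)) = 0" using orth_T top Z Zu by simp
      then show ?thesis using ext_C_dim_shift_outside_window[OF bn u e _ y, of a] False Zu by simp
    qed
  qed
  have "shift n a y \<in> indec n" using y n by (auto simp: shift_def indec_def window_def)
  moreover have "ext_C_dim n (shift n a y) (shift n a y) = 0"
    using ext_C_dim_shift_window[OF bn y y] by (simp add: noncrossing_def crosses_def)
  ultimately show "y \<in> ?F" using mem_of_maximal_rigid[OF T _ _ orth] y by blast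
qed

lemma summands_in_wing:
  assumes "rigid n T" "(a,b) \<in> T"
  shows "{X \<in> T. X \<in> wing n (a,b)} = shift n a ` {x \<in> window 0 b. shift n a x \<in> T}"
proof -
  have "a < n" using assms by (auto simp: rigid_def indec_def)
  then have "wing n (a,b) = shift n a ` window 0 b" using wing_shift[of n a 0 b] by (simp add: shift_def)
  then show ?thesis by auto
qed

lemma card_summands_in_wing:
  assumes n: "0 < n" and T: "maximal_rigid n T" and Tk: "Tk \<in> T"
  shows "card {X \<in> T. X \<in> wing n Tk} = ql Tk"
proof -
  obtain a b where ab: "Tk = (a,b)" by (cases Tk)
  let ?F = "{x \<in> window 0 b. shift n a x \<in> T}"
  have rig: "rigid n T" using T by (simp add: maximal_rigid_def)
  have F: "maximal_noncrossing ?F 0 b" using maximal_noncrossing_summands[OF n T] Tk ab by simp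
  have bn: "b < n" using ql_less_of_rigid[OF n rig Tk] ab by (simp add: ql_def)
  have "a < n" "1 \<le> b" using rig Tk ab by (auto simp: rigid_def indec_def)
  then have top: "(0,b) \<in> ?F" using Tk ab by (simp add: shift_def window_def)
  have "card {X \<in> T. X \<in> wing n Tk} = card (shift n a ` ?F)"
    using summands_in_wing[OF rig] Tk ab by simp
  also have "\<dots> = card ?F"
    by (rule card_image, rule inj_on_subset[OF inj_on_shift_window[of b]]) (use bn in auto)
  also have "\<dots> = b" using card_maximal_noncrossing[OF F top] .
  finally show ?thesis using ab by (simp add: ql_def)
qed

definition shift_or_zero :: "nat \<Rightarrow> nat \<Rightarrow> nat \<Rightarrow> nat \<Rightarrow> (nat \<times> nat) option" where
  "shift_or_zero n a q M = (if M = 0 then None else Some (shift n a (q,M)))"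

lemma wing0_shift_or_zero: "wing0 n (shift_or_zero n a q M) = shift n a ` window q M"
  by (simp add: shift_or_zero_def wing0_def wing_shift)

lemma ql0_shift_or_zero: "ql0 (shift_or_zero n a q M) = M"
  by (simp add: shift_or_zero_def ql0_def ql_def shift_def)

lemma subwing_triple_shift_or_zero:
  assumes "a < n" "2 \<le> b" "b < n" "c < b"
  shows "subwing_triple n (a,b) (shift_or_zero n a 0 c) (shift_or_zero n a (c+1) (b-c-1))"
  using assms
  by (cases "c = 0"; cases "c + 1 = b")
     (auto simp: subwing_triple_def nondeg_subwing_triple_def deg_subwing_triple_def
        shift_or_zero_def shift_def add.assoc)

lemma summands_in_wing_split:
  assumes n: "0 < n" and T: "maximal_rigid n T" and top: "(a,b) \<in> T" and b: "2 \<le> b"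
  obtains Y Z where "subwing_triple n (a,b) Y Z" "summand_or_zero T Y" "summand_or_zero T Z"
    "{X \<in> T. X \<in> wing n (a,b) \<and> X \<noteq> (a,b)} \<subseteq> wing0 n Y \<union> wing0 n Z"
    "wing0 n Y \<subseteq> wing n (a,b)" "wing0 n Z \<subseteq> wing n (a,b)" "ql0 Y < b" "ql0 Z < b"
proof -
  let ?F = "{x \<in> window 0 b. shift n a x \<in> T}"
  have rig: "rigid n T" using T by (simp add: maximal_rigid_def)
  have bn: "b < n" using ql_less_of_rigid[OF n rig top] by (simp add: ql_def)
  have a: "a < n" using rig top by (auto simp: rigid_def indec_def)
  then have top': "(0,b) \<in> ?F" and wing_top: "wing n (a,b) = shift n a ` window 0 b"
    using top b wing_shift[of n a 0 b] by (simp_all add: shift_def window_def)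
  obtain c where c: "c < b" "c = 0 \<or> (0,c) \<in> ?F" "b - c - 1 = 0 \<or> (0+c+1, b-c-1) \<in> ?F"
    and cover: "?F - {(0,b)} \<subseteq> window 0 c \<union> window (0+c+1) (b-c-1)"
    using maximal_noncrossing_split[OF maximal_noncrossing_summands[OF n T top] top'] by blast
  define Y where "Y = shift_or_zero n a 0 c"
  define Z where "Z = shift_or_zero n a (c+1) (b-c-1)"
  show thesis
  proof (rule that)
    show "subwing_triple n (a,b) Y Z"
      unfolding Y_def Z_def using subwing_triple_shift_or_zero[OF a b bn c(1)] .
    show "summand_or_zero T Y" "summand_or_zero T Z"
      using c unfolding Y_def Z_def by (auto simp: summand_or_zero_def shift_or_zero_def)
    have "{X \<in> T. X \<in> wing n (a,b) \<and> X \<noteq> (a,b)} \<subseteq> shift n a ` (?F - {(0,b)})"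
      using wing_top a by (auto simp: shift_def)
    also have "\<dots> \<subseteq> wing0 n Y \<union> wing0 n Z"
      using cover unfolding Y_def Z_def wing0_shift_or_zero by auto
    finally show "{X \<in> T. X \<in> wing n (a,b) \<and> X \<noteq> (a,b)} \<subseteq> wing0 n Y \<union> wing0 n Z" .
    have "window 0 c \<subseteq> window 0 b" "window (c+1) (b-c-1) \<subseteq> window 0 b"
      using c(1) by (auto simp: window_def)
    then show "wing0 n Y \<subseteq> wing n (a,b)" "wing0 n Z \<subseteq> wing n (a,b)"
      unfolding Y_def Z_def wing0_shift_or_zero wing_top by (simp_all add: image_mono)
    show "ql0 Y < b" "ql0 Z < b"
      unfolding Y_def Z_def ql0_shift_or_zero using c(1) by auto
  qed
qed

lemma ql_le_of_mem_wing: "X \<in> wing n Y \<Longrightarrow> ql X \<le> ql Y"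
  by (auto simp: wing_def ql_def)

lemma card_summands_in_subwing:
  assumes n: "0 < n" and T: "maximal_rigid n T" and Tk: "Tk \<in> T"
    and Y: "summand_or_zero T Y" "wing0 n Y \<subseteq> wing n Tk" "ql0 Y < ql Tk"
  shows "card {X \<in> T. X \<in> wing n Tk \<and> X \<noteq> Tk \<and> X \<in> wing0 n Y} = ql0 Y"
proof (cases Y)
  case (Some Y')
  have "Tk \<notin> wing n Y'" using ql_le_of_mem_wing Y(3) Some by (fastforce simp: ql0_def)
  then have "{X \<in> T. X \<in> wing n Tk \<and> X \<noteq> Tk \<and> X \<in> wing0 n Y} = {X \<in> T. X \<in> wing n Y'}"
    using Y(2) Some by (auto simp: wing0_def)
  moreover have "Y' \<in> T" using Y(1) Some by (simp add: summand_or_zero_def)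
  ultimately show ?thesis using card_summands_in_wing[OF n T] Some by (simp add: ql0_def)
qed (simp add: wing0_def ql0_def)

theorem lemma2p5:
  fixes n :: nat and T :: "(nat \<times> nat) set" and Tk :: "nat \<times> nat"
  assumes "n \<ge> 2"
    and "maximal_rigid n T"
    and "Tk \<in> T"
  shows "card {X \<in> T. X \<in> wing n Tk} = ql Tk \<and>
         (ql Tk > 1 \<longrightarrow>
         (\<exists>Y Z. subwing_triple n Tk Y Z \<and> summand_or_zero T Y \<and> summand_or_zero T Z \<and>
           {X \<in> T. X \<in> wing n Tk \<and> X \<noteq> Tk} \<subseteq> wing0 n Y \<union> wing0 n Z \<and>
           card {X \<in> T. X \<in> wing n Tk \<and> X \<noteq> Tk \<and> X \<in> wing0 n Y} = ql0 Y \<and>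
           card {X \<in> T. X \<in> wing n Tk \<and> X \<noteq> Tk \<and> X \<in> wing0 n Z} = ql0 Z))"
proof (intro conjI impI)
  have n: "0 < n" using assms(1) by simp
  show "card {X \<in> T. X \<in> wing n Tk} = ql Tk"
    using card_summands_in_wing[OF n assms(2,3)] .
  obtain a b where ab: "Tk = (a,b)" by (cases Tk)
  assume "ql Tk > 1"
  then have b: "2 \<le> b" using ab by (simp add: ql_def)
  obtain Y Z where "subwing_triple n Tk Y Z" "summand_or_zero T Y" "summand_or_zero T Z"
    "{X \<in> T. X \<in> wing n Tk \<and> X \<noteq> Tk} \<subseteq> wing0 n Y \<union> wing0 n Z"
    and Y: "wing0 n Y \<subseteq> wing n Tk" "ql0 Y < ql Tk"
    and Z: "wing0 n Z \<subseteq> wing n Tk" "ql0 Z < ql Tk"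
    using summands_in_wing_split[OF n assms(2) assms(3)[unfolded ab] b] unfolding ab ql_def snd_conv .
  with card_summands_in_subwing[OF n assms(2,3)] show "\<exists>Y Z. subwing_triple n Tk Y Z \<and>
      summand_or_zero T Y \<and> summand_or_zero T Z \<and>
      {X \<in> T. X \<in> wing n Tk \<and> X \<noteq> Tk} \<subseteq> wing0 n Y \<union> wing0 n Z \<and>
      card {X \<in> T. X \<in> wing n Tk \<and> X \<noteq> Tk \<and> X \<in> wing0 n Y} = ql0 Y \<and>
      card {X \<in> T. X \<in> wing n Tk \<and> X \<noteq> Tk \<and> X \<in> wing0 n Z} = ql0 Z"
    by blast
qed

end
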